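(* For non-negative integers $n,p$ define \begin{multline*} h(n,p)=\frac{4p^2+2p}{n+2p+1}+4p-2+(4p^2+4np+2n+6p+2)2^{1-n}+2^{1-2p}-(4p^2+2np+2n+6p+2)2^{1-n-2p}\\ +2^{1-n-2p}\sum_{i=1}^{p} i\Big\{2\binom{n+2p+3}{n+2i+1}-\binom{n+2p+3}{n+2i+2}-(2n+4p+4)\binom{2p+3}{2i+1}\Big\}\\ +2^{2-n}\sum_{i=1}^{p}\sum_{k=2i-1}^{2p} i\,2^{-k}\Big\{\frac{n+2p}{n+2p+1}\binom{n+k+2}{n+2i+1}-\binom{n+k+2}{n+2i}+\binom{k+3}{2i+1}\Big\}\\ +2^{1-2p}\sum_{i=1}^{p}\sum_{k=1}^{n} i\,2^{-k}\Big\{\binom{k+2p+3}{k+2i+2}-\frac{2n+4p+4}{n+2p+1}\binom{k+2p+2}{k+2i+1}\Big\}. \end{multline*} Then $h(n,p)=0$ for all integers $n,p\ge0$.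
   Context: $\binom{a}{b}=\frac{a!}{b!(a-b)!}$ for integers $0\le b\le a$. A sum with no terms equals $0$. *)

theory Defs
  imports Complex_Main
begin

definition h :: "nat \<Rightarrow> nat \<Rightarrow> real" where
"h n p =
   (4*real p^2 + 2*real p) / (real n + 2*real p + 1) + 4*real p - 2
 + (4*real p^2 + 4*real n*real p + 2*real n + 6*real p + 2) * 2 powr (1 - real n)
 + 2 powr (1 - 2*real p)
 - (4*real p^2 + 2*real n*real p + 2*real n + 6*real p + 2) * 2 powr (1 - real n - 2*real p)
 + 2 powr (1 - real n - 2*real p) *
     (\<Sum>i=1..p. real i * (2 * real ((n+2*p+3) choose (n+2*i+1))
                          - real ((n+2*p+3) choose (n+2*i+2))
                          - (2*real n + 4*real p + 4) * real ((2*p+3) choose (2*i+1))))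
 + 2 powr (2 - real n) *
     (\<Sum>i=1..p. \<Sum>k=2*i-1..2*p. real i * 2 powr (- real k) *
        ((real n + 2*real p) / (real n + 2*real p + 1) * real ((n+k+2) choose (n+2*i+1))
         - real ((n+k+2) choose (n+2*i)) + real ((k+3) choose (2*i+1))))
 + 2 powr (1 - 2*real p) *
     (\<Sum>i=1..p. \<Sum>k=1..n. real i * 2 powr (- real k) *
        (real ((k+2*p+3) choose (k+2*i+2))
         - (2*real n + 4*real p + 4) / (real n + 2*real p + 1) * real ((k+2*p+2) choose (k+2*i+1))))"

end

theory Submission
  imports Defs
begin

(* Every sum in h(n,p) is evaluated in closed form.  The basic object is
   the prefix sum S(m,r) = sum_{j<=r} C(m,j) of a row of Pascal's triangle; Pascal's rule
   gives S(m+1,r) = 2 S(m,r) - C(m,r), so sums of binomial coefficients weighted by 1/2^k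
   telescope to values S(.,.)/2^k.

   1. For fixed i, the inner sums over k are evaluated by these telescoping identities.
      After binomial symmetry, all contributions of the long row n+2p+3 cancel, and the
      i-th summand of h becomes i times a combination of S(2p+3, 2p+1-2i), S(2p+4, 2p+1-2i),
      S(2p+4, 2i+1) and C(2p+3, 2i+1) (h_summand_closed_form).
   2. A prefix of row m with odd bound is a sum of odd-indexed entries of row m+1.  Summation
      by parts turns the remaining sums over i into odd-indexed binomial sums with quadratic
      weights, which are computed from the first three binomial moments.
   3. The theorem follows by an algebraic identity between the resulting closed forms. *)

section \<open>Prefix sums of a row of Pascal's triangle\<close>

definition binom_prefix :: "nat \<Rightarrow> nat \<Rightarrow> real" where
  "binom_prefix m r = (\<Sum>j\<le>r. real (m choose j))"

lemma binom_prefix_0 [simp]: "binom_prefix m 0 = 1"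
  by (simp add: binom_prefix_def)

lemma binom_prefix_Suc: "binom_prefix m (Suc r) = binom_prefix m r + real (m choose Suc r)"
  by (simp add: binom_prefix_def)

lemma binom_prefix_Suc_row: "binom_prefix (Suc m) r = 2 * binom_prefix m r - real (m choose r)"
  by (induction r) (simp_all add: binom_prefix_Suc)

lemma binom_prefix_Suc_Suc:
  "binom_prefix (Suc m) (Suc s) = 2 * binom_prefix m s + real (m choose Suc s)"
  by (simp add: binom_prefix_Suc_row binom_prefix_Suc)

lemma binom_prefix_full: "m \<le> r \<Longrightarrow> binom_prefix m r = 2 ^ m"
proof (induction r rule: dec_induct)
  case base
  then show ?case by (simp add: binom_prefix_def choose_row_sum flip: of_nat_sum)
qed (simp add: binom_prefix_Suc)

lemma binom_prefix_complement:
  "r < m \<Longrightarrow> binom_prefix m r + binom_prefix m (m - Suc r) = 2 ^ m"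
proof (induction m arbitrary: r)
  case 0
  then show ?case by simp
next
  case (Suc m)
  show ?case
  proof (cases "r = m")
    case True
    then show ?thesis by (simp add: binom_prefix_Suc_row binom_prefix_full)
  next
    case False
    with Suc.prems have "r < m" by simp
    then have "Suc m - Suc r = Suc (m - Suc r)"
      and "m choose Suc (m - Suc r) = m choose r"
      by (simp_all add: Suc_diff_Suc binomial_symmetric[of r m])
    then show ?thesis
      using Suc.IH[OF \<open>r < m\<close>] by (simp add: binom_prefix_Suc_row binom_prefix_Suc)
  qed
qed

(* A prefix of row m ending at an odd bound is the sum of the odd-indexed entries of
   row m+1 up to that bound (pair the entries j-1, j of row m by Pascal's rule). *)
lemma binom_prefix_odd: "binom_prefix m (2*t+1) = (\<Sum>u\<le>t. real (Suc m choose (2*u+1)))"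
proof (induction t)
  case 0
  then show ?case by (simp add: binom_prefix_def atMost_Suc)
next
  case (Suc t)
  have "2 * Suc t + 1 = Suc (Suc (2*t+1))" by simp
  then show ?case using Suc by (simp add: binom_prefix_Suc)
qed

section \<open>Halving sums of binomial coefficients\<close>

(* Sums of binomial coefficients weighted by 1/2^k telescope by Pascal's rule.  Here the
   lower index is fixed to the value a + c at which the first term lies on the diagonal. *)
lemma halving_sum_from_diagonal:
  assumes "a \<le> b"
  shows "(\<Sum>k=a..b. real ((k+c) choose (a+c)) / 2^k) = binom_prefix (Suc b + c) (b - a) / 2^b"
  using assms
proof (induction b rule: dec_induct)
  case base
  then show ?case by simp
next
  case (step m)
  have sym: "(Suc m + c) choose Suc (m - a) = (Suc m + c) choose (a + c)"
    using step.hyps by (subst binomial_symmetric) (auto simp: add.commute)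
  have "binom_prefix (Suc (Suc m) + c) (Suc m - a)
      = 2 * binom_prefix (Suc m + c) (m - a) + real ((Suc m + c) choose (a + c))"
    using step.hyps sym by (simp add: Suc_diff_le binom_prefix_Suc_Suc)
  moreover have "(\<Sum>k=a..Suc m. real ((k+c) choose (a+c)) / 2^k)
      = binom_prefix (Suc m + c) (m - a) / 2^m + real ((Suc m + c) choose (a+c)) / 2^Suc m"
    using step.hyps step.IH by simp
  ultimately show ?case
    by (simp add: field_simps)
qed

lemma halving_sum_below_diagonal:
  assumes "a \<le> b" and "0 < a + c"
  shows "(\<Sum>k=a..b. real ((k+c) choose (a+c-1)) / 2^k)
     = binom_prefix (Suc b + c) (Suc b - a) / 2^b - 2 / 2^a"
  using assms(1)
proof (induction b rule: dec_induct)
  case base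
  have "(a + c) choose (a + c - 1) = a + c"
    using assms(2) by (subst binomial_symmetric) auto
  then show ?case by (simp add: binom_prefix_Suc field_simps)
next
  case (step m)
  have sym: "(Suc m + c) choose Suc (Suc m - a) = (Suc m + c) choose (a + c - 1)"
    using step.hyps assms(2) by (subst binomial_symmetric) (auto simp: add.commute)
  have "binom_prefix (Suc (Suc m) + c) (Suc (Suc m) - a)
      = 2 * binom_prefix (Suc m + c) (Suc m - a) + real ((Suc m + c) choose (a + c - 1))"
    using step.hyps sym by (simp add: Suc_diff_le binom_prefix_Suc_Suc)
  moreover have "(\<Sum>k=a..Suc m. real ((k+c) choose (a+c-1)) / 2^k)
      = binom_prefix (Suc m + c) (Suc m - a) / 2^m - 2 / 2^a
        + real ((Suc m + c) choose (a+c-1)) / 2^Suc m"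
    using step.hyps step.IH by simp
  ultimately show ?case
    by (simp add: field_simps)
qed

lemma halving_sum_band:
  "q \<le> c \<Longrightarrow> (\<Sum>k=1..n. real ((k+c) choose (k+q)) / 2^k)
     = binom_prefix (Suc c) (c - q) - binom_prefix (Suc n + c) (c - q) / 2^n"
proof (induction n)
  case 0
  then show ?case by simp
next
  case (Suc n)
  have "(Suc n + c) choose (c - q) = (Suc n + c) choose (Suc n + q)"
    using Suc.prems by (subst binomial_symmetric) auto
  with Suc show ?case
    by (simp add: binom_prefix_Suc_row field_simps)
qed

section \<open>Odd-indexed binomial sums with quadratic weights\<close>

(* The first binomial moment, sum_i i C(m,i) = m 2^(m-1), in a form free of nat subtraction. *)
lemma binomial_first_moment: "(\<Sum>i\<le>m. real i * real (m choose i)) = real m * 2^m / 2"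
proof -
  have "(\<Sum>i\<le>m. real i * real (m choose i)) = real (\<Sum>i\<le>m. i * (m choose i))"
    by simp
  also have "\<dots> = real m * 2^(m-1)"
    by (simp add: choose_linear_sum)
  finally show ?thesis by (cases m) simp_all
qed

lemma real_Suc_times_binomial:
  "real (Suc k) * real (Suc n choose Suc k) = real (Suc n) * real (n choose k)"
  by (metis Suc_times_binomial of_nat_mult)

lemma binomial_second_moment:
  "(\<Sum>i\<le>m. real i ^ 2 * real (m choose i)) = real m * (real m + 1) * 2^m / 4"
proof (cases m)
  case 0
  then show ?thesis by simp
next
  case (Suc n)
  have "(\<Sum>i\<le>Suc n. real i ^ 2 * real (Suc n choose i))
      = (\<Sum>k\<le>n. real (Suc k) * (real (Suc k) * real (Suc n choose Suc k)))"
    by (simp only: sum.atMost_Suc_shift power2_eq_square mult.assoc)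
  also have "\<dots> = real (Suc n) * (\<Sum>k\<le>n. real k * real (n choose k) + real (n choose k))"
    unfolding sum_distrib_left
    by (intro sum.cong refl) (simp only: real_Suc_times_binomial, simp add: algebra_simps)
  also have "\<dots> = real (Suc n) * (real n * 2^n / 2 + 2^n)"
    by (simp add: sum.distrib binomial_first_moment choose_row_sum flip: of_nat_sum)
  finally show ?thesis
    using Suc by (simp add: field_simps)
qed

lemma alternating_second_moment:
  assumes "3 \<le> m"
  shows "(\<Sum>i\<le>m. (-1)^i * real i ^ 2 * real (m choose i)) = 0"
proof -
  obtain n where m: "m = Suc n" and "2 \<le> n" using assms by (cases m) auto
  have "(\<Sum>i\<le>Suc n. (-1)^i * real i ^ 2 * real (Suc n choose i))
      = (\<Sum>k\<le>n. (-1)^Suc k * real (Suc k) * (real (Suc k) * real (Suc n choose Suc k)))"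
    by (simp only: sum.atMost_Suc_shift power2_eq_square mult.assoc)
  also have "\<dots> = - real (Suc n) * (\<Sum>k\<le>n. (-1)^k * real k * real (n choose k)
                                          + (-1)^k * real (n choose k))"
    unfolding sum_distrib_left
    by (intro sum.cong refl) (simp only: real_Suc_times_binomial, simp add: algebra_simps)
  also have "\<dots> = 0"
    using \<open>2 \<le> n\<close> by (simp add: sum.distrib choose_alternating_sum choose_alternating_linear_sum)
  finally show ?thesis using m by simp
qed

(* Odd-indexed entries of row m weighted by a quadratic polynomial: the weighted row sum
   is halved, because the alternating sums of the moments of order 0, 1, 2 vanish. *)
lemma odd_part_binomial_quadratic_sum:
  assumes "3 \<le> m"
  shows "(\<Sum>j\<le>m. if odd j then real (m choose j) * (a + b * real j + c * real j ^ 2) else 0)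
     = 2^m * (a + b * real m / 2 + c * real m * (real m + 1) / 4) / 2"
proof -
  have "2 * (if odd j then real (m choose j) * (a + b * real j + c * real j ^ 2) else 0)
     = a * real (m choose j) + b * (real j * real (m choose j)) + c * (real j ^ 2 * real (m choose j))
      - (a * ((-1)^j * real (m choose j)) + b * ((-1)^j * real j * real (m choose j))
         + c * ((-1)^j * real j ^ 2 * real (m choose j)))" for j
    by (simp add: algebra_simps)
  then have "2 * (\<Sum>j\<le>m. if odd j then real (m choose j) * (a + b * real j + c * real j ^ 2) else 0)
     = a * (\<Sum>j\<le>m. real (m choose j)) + b * (\<Sum>j\<le>m. real j * real (m choose j))
       + c * (\<Sum>j\<le>m. real j ^ 2 * real (m choose j))
       - (a * (\<Sum>j\<le>m. (-1)^j * real (m choose j)) + b * (\<Sum>j\<le>m. (-1)^j * real j * real (m choose j))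
          + c * (\<Sum>j\<le>m. (-1)^j * real j ^ 2 * real (m choose j)))"
    by (simp add: sum_distrib_left sum.distrib sum_subtractf)
  also have "\<dots> = 2^m * (a + b * real m / 2 + c * real m * (real m + 1) / 4)"
  proof -
    have "(\<Sum>j\<le>m. real (m choose j)) = 2^m"
      by (simp add: choose_row_sum flip: of_nat_sum)
    moreover have "(\<Sum>j\<le>m. (-1)^j * real (m choose j)) = 0"
      using assms by (intro choose_alternating_sum) simp
    moreover have "(\<Sum>j\<le>m. (-1)^j * real j * real (m choose j)) = 0"
      using assms by (intro choose_alternating_linear_sum) simp
    ultimately show ?thesis
      using assms
      by (simp only: binomial_first_moment binomial_second_moment alternating_second_moment)
        (simp add: field_simps)
  qed
  finally show ?thesis by simp
qed

lemma sum_odd_indices: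
  fixes f :: "nat \<Rightarrow> real"
  shows "(\<Sum>u\<le>K. f (2*u+1)) = (\<Sum>j\<le>2*K+1. if odd j then f j else 0)"
proof (induction K)
  case 0
  then show ?case by (simp add: atMost_Suc)
next
  case (Suc K)
  have "2 * Suc K + 1 = Suc (Suc (2*K+1))" by simp
  then show ?case using Suc by (simp add: atMost_Suc)
qed

lemma odd_binomial_quadratic_sum:
  assumes "m = 2*K+1 \<or> m = 2*K+2" and "3 \<le> m"
  shows "(\<Sum>u\<le>K. real (m choose (2*u+1)) * (a + b * real (2*u+1) + c * real (2*u+1) ^ 2))
     = 2^m * (a + b * real m / 2 + c * real m * (real m + 1) / 4) / 2"
proof -
  have "(\<Sum>u\<le>K. real (m choose (2*u+1)) * (a + b * real (2*u+1) + c * real (2*u+1) ^ 2))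
      = (\<Sum>j\<le>2*K+1. if odd j then real (m choose j) * (a + b * real j + c * real j ^ 2) else 0)"
    by (rule sum_odd_indices)
  also have "\<dots> = (\<Sum>j\<le>m. if odd j then real (m choose j) * (a + b * real j + c * real j ^ 2) else 0)"
    using assms(1)
  proof
    assume "m = 2*K+2"
    then have "m = Suc (2*K+1)" by simp
    then show ?thesis by (simp only: sum.atMost_Suc) simp
  qed simp
  finally show ?thesis
    using odd_part_binomial_quadratic_sum[OF assms(2)] by simp
qed

section \<open>Weighted sums of prefix sums\<close>

lemma sum_prefix_sums: "(\<Sum>t\<le>p. \<Sum>u\<le>t. c u) = (\<Sum>u\<le>p. c u * (real p + 1 - real u))"
proof (induction p)
  case 0
  then show ?case by simp
next
  case (Suc p)
  have "(\<Sum>u\<le>Suc p. c u * (real (Suc p) + 1 - real u))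
      = (\<Sum>u\<le>p. c u * (real p + 1 - real u)) + (\<Sum>u\<le>Suc p. c u)"
    by (simp add: sum.distrib[symmetric] algebra_simps)
  then show ?case using Suc by simp
qed

lemma sum_prefix_sums_weighted_desc:
  "(\<Sum>t<p. (real p - real t) * (\<Sum>u\<le>t. c u))
     = (\<Sum>u<p. c u * ((real p - real u) * (real p - real u + 1) / 2))"
proof (induction p)
  case 0
  then show ?case by simp
next
  case (Suc p)
  have "(\<Sum>t<Suc p. (real (Suc p) - real t) * (\<Sum>u\<le>t. c u))
      = (\<Sum>t<p. (real p - real t) * (\<Sum>u\<le>t. c u)) + (\<Sum>t\<le>p. \<Sum>u\<le>t. c u)"
    by (simp add: lessThan_Suc_atMost[symmetric] sum.distrib[symmetric] algebra_simps)
  also have "\<dots> = (\<Sum>u<p. c u * ((real p - real u) * (real p - real u + 1) / 2))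
                      + (\<Sum>u\<le>p. c u * (real p + 1 - real u))"
    using Suc.IH sum_prefix_sums by simp
  also have "\<dots> = (\<Sum>u<p. c u * ((real p - real u) * (real p - real u + 1) / 2)
                      + c u * (real p + 1 - real u)) + c p"
    by (simp add: lessThan_Suc_atMost[symmetric] sum.distrib)
  also have "\<dots> = (\<Sum>u<Suc p. c u * ((real (Suc p) - real u) * (real (Suc p) - real u + 1) / 2))"
    by (simp add: field_simps)
  finally show ?case .
qed

lemma sum_prefix_sums_weighted_asc:
  "(\<Sum>i=1..p. real i * (\<Sum>u\<le>i. c u))
     = (\<Sum>u\<le>p. c u * ((real p * (real p + 1) - real u * (real u - 1)) / 2))"
proof (induction p)
  case 0
  then show ?case by simp
next
  case (Suc p)
  have "(\<Sum>u\<le>Suc p. c u * ((real (Suc p) * (real (Suc p) + 1) - real u * (real u - 1)) / 2))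
     = (\<Sum>u\<le>p. c u * ((real p * (real p + 1) - real u * (real u - 1)) / 2))
       + real (Suc p) * (\<Sum>u\<le>Suc p. c u)"
    by (simp add: sum.distrib[symmetric] sum_distrib_left algebra_simps
        add_divide_distrib diff_divide_distrib)
  then show ?case using Suc by simp
qed

lemma weighted_reversed_odd_prefix_sum:
  "(\<Sum>i=1..p. real i * binom_prefix m (2*p+1-2*i))
     = (\<Sum>u<p. real (Suc m choose (2*u+1)) * ((real p - real u) * (real p - real u + 1) / 2))"
proof -
  define c where "c u = real (Suc m choose (2*u+1))" for u
  have "(\<Sum>i=1..p. real i * binom_prefix m (2*p+1-2*i)) = (\<Sum>i=1..p. real i * (\<Sum>u\<le>p-i. c u))"
  proof (intro sum.cong refl)
    fix i assume "i \<in> {1..p}"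
    then have "2*p+1-2*i = 2*(p-i)+1" by auto
    then show "real i * binom_prefix m (2*p+1-2*i) = real i * (\<Sum>u\<le>p-i. c u)"
      unfolding c_def by (simp only: binom_prefix_odd)
  qed
  also have "\<dots> = (\<Sum>i<p. real (Suc i) * (\<Sum>u\<le>p - Suc i. c u))"
    by (simp add: sum.atLeast1_atMost_eq)
  also have "\<dots> = (\<Sum>i<p. (\<lambda>t. (real p - real t) * (\<Sum>u\<le>t. c u)) (p - Suc i))"
    by (intro sum.cong) auto
  also have "\<dots> = (\<Sum>t<p. (real p - real t) * (\<Sum>u\<le>t. c u))"
    by (rule sum.nat_diff_reindex)
  finally show ?thesis
    by (simp add: sum_prefix_sums_weighted_desc c_def)
qed

lemma weighted_odd_prefix_sum:
  "(\<Sum>i=1..p. real i * binom_prefix m (2*i+1))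
     = (\<Sum>u\<le>p. real (Suc m choose (2*u+1)) * ((real p * (real p + 1) - real u * (real u - 1)) / 2))"
  unfolding binom_prefix_odd by (rule sum_prefix_sums_weighted_asc)

(* The odd binomial sums below produce powers 2^(2p+c); they are compared with 4^p. *)
lemma four_power: "(4::real) ^ p = (2 ^ p)\<^sup>2"
  by (induction p) (simp_all add: power_mult_distrib)

(* The four sums over i that remain after the inner sums of h are evaluated.  Each is
   an odd-indexed quadratic binomial sum, possibly after adding vanishing end terms. *)
lemma sum_i_binomial_2p3:
  "(\<Sum>i=1..p. real i * real ((2*p+3) choose (2*i+1))) = (2*real p+1) * 4^p - (real p+1)"
proof -
  \<comment> \<open>the weight i = (j-1)/2 of the entry j = 2i+1, written as a quadratic in j\<close>
  define w where "w j = -1/2 + 1/2 * real j + 0 * real j ^ 2" for j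
  define f where "f u = real ((2*p+3) choose (2*u+1)) * w (2*u+1)" for u
  have top: "(2*p+3) choose (2*(p+1)+1) = 1"
    by (simp add: numeral_3_eq_3)
  have "(\<Sum>i=1..p. real i * real ((2*p+3) choose (2*i+1))) = (\<Sum>u\<le>p. f u)"
    by (simp add: f_def w_def atLeast1_atMost_eq_remove0 sum_diff1 algebra_simps)
  also have "\<dots> = (\<Sum>u\<le>p+1. f u) - (real p + 1)"
    using top by (simp add: f_def w_def algebra_simps)
  also have "\<dots> = (2*real p+1) * 4^p - (real p+1)"
    unfolding f_def w_def
    by (subst odd_binomial_quadratic_sum) (auto simp: power_add power_mult field_simps four_power)
  finally show ?thesis .
qed

lemma sum_i_prefix_2p3_reversed:
  "(\<Sum>i=1..p. real i * binom_prefix (2*p+3) (2*p+1-2*i)) = real p * (2*real p+1) * 4^p / 2"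
proof -
  define w where "w j = (2*real p+1)*(2*real p+3)/8 + (- (4*real p+4)/8) * real j + 1/8 * real j^2" for j
  define f where "f u = real ((2*p+4) choose (2*u+1)) * w (2*u+1)" for u
  have row: "Suc (2*p+3) = 2*p+4" by simp
  have "(\<Sum>i=1..p. real i * binom_prefix (2*p+3) (2*p+1-2*i))
      = (\<Sum>u<p. real ((2*p+4) choose (2*u+1)) * ((real p - real u) * (real p - real u + 1) / 2))"
    using weighted_reversed_odd_prefix_sum[where p=p and m="2*p+3"] unfolding row .
  also have "\<dots> = (\<Sum>u<p. f u)"
    by (intro sum.cong refl) (simp add: f_def w_def field_simps power2_eq_square)
  also have "\<dots> = (\<Sum>u\<le>p+1. f u)"
  proof -
    have "w (2*p+1) = 0" and "w (2*(p+1)+1) = 0"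
      by (simp_all add: w_def field_simps power2_eq_square)
    then show ?thesis
      by (simp add: lessThan_Suc_atMost[symmetric] f_def)
  qed
  also have "\<dots> = real p * (2*real p+1) * 4^p / 2"
    unfolding f_def w_def
    by (subst odd_binomial_quadratic_sum) (auto simp: power_add power_mult field_simps four_power power2_eq_square)
  finally show ?thesis .
qed

lemma sum_i_prefix_2p4_reversed:
  "(\<Sum>i=1..p. real i * binom_prefix (2*p+4) (2*p+1-2*i)) = (2*real p^2 - real p + 1) * 4^p - 1"
proof -
  define w where "w j = (2*real p+1)*(2*real p+3)/8 + (- (4*real p+4)/8) * real j + 1/8 * real j^2" for j
  define f where "f u = real ((2*p+5) choose (2*u+1)) * w (2*u+1)" for u
  have row: "Suc (2*p+4) = 2*p+5" by simp
  have top: "f (p+2) = 1"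
  proof -
    have "2*(p+2)+1 = 2*p+5" by simp
    then have "(2*p+5) choose (2*(p+2)+1) = 1" by (simp only: binomial_n_n)
    moreover have "w (2*(p+2)+1) = 1"
      by (simp add: w_def field_simps power2_eq_square)
    ultimately show ?thesis by (simp add: f_def)
  qed
  have "(\<Sum>i=1..p. real i * binom_prefix (2*p+4) (2*p+1-2*i))
      = (\<Sum>u<p. real ((2*p+5) choose (2*u+1)) * ((real p - real u) * (real p - real u + 1) / 2))"
    using weighted_reversed_odd_prefix_sum[where p=p and m="2*p+4"] unfolding row .
  also have "\<dots> = (\<Sum>u<p. f u)"
    by (intro sum.cong refl) (simp add: f_def w_def field_simps power2_eq_square)
  also have "\<dots> = (\<Sum>u\<le>p+2. f u) - f (p+2)"
  proof -
    have "w (2*p+1) = 0" and "w (2*(p+1)+1) = 0"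
      by (simp_all add: w_def field_simps power2_eq_square)
    then have "f p = 0" and "f (p+1) = 0"
      by (simp_all add: f_def)
    then show ?thesis
      by (simp add: lessThan_Suc_atMost[symmetric] numeral_2_eq_2)
  qed
  also have "\<dots> = (2*real p^2 - real p + 1) * 4^p - 1"
    unfolding top unfolding f_def w_def
    by (subst odd_binomial_quadratic_sum) (auto simp: power_add power_mult field_simps four_power power2_eq_square)
  finally show ?thesis .
qed

lemma sum_i_prefix_2p4:
  "(\<Sum>i=1..p. real i * binom_prefix (2*p+4) (2*i+1)) = (6*real p^2 + 5*real p - 1) * 4^p + real p + 1"
proof -
  define w where "w j = (4*real p^2+4*real p-3)/8 + 1/2 * real j + (-1/8) * real j^2" for j
  define f where "f u = real ((2*p+5) choose (2*u+1)) * w (2*u+1)" for u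
  have row: "Suc (2*p+4) = 2*p+5" by simp
  have top: "f (p+2) = - (real p + 1)"
  proof -
    have "2*(p+2)+1 = 2*p+5" by simp
    then have "(2*p+5) choose (2*(p+2)+1) = 1" by (simp only: binomial_n_n)
    moreover have "w (2*(p+2)+1) = - (real p + 1)"
      by (simp add: w_def field_simps power2_eq_square)
    ultimately show ?thesis by (simp add: f_def)
  qed
  have "(\<Sum>i=1..p. real i * binom_prefix (2*p+4) (2*i+1))
      = (\<Sum>u\<le>p. real ((2*p+5) choose (2*u+1)) * ((real p * (real p + 1) - real u * (real u - 1)) / 2))"
    using weighted_odd_prefix_sum[where p=p and m="2*p+4"] unfolding row .
  also have "\<dots> = (\<Sum>u\<le>p. f u)"
    by (intro sum.cong refl) (simp add: f_def w_def field_simps power2_eq_square)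
  also have "\<dots> = (\<Sum>u\<le>p+2. f u) - f (p+2)"
  proof -
    have "w (2*(p+1)+1) = 0"
      by (simp add: w_def field_simps power2_eq_square)
    then have "f (p+1) = 0"
      by (simp add: f_def)
    then show ?thesis
      by (simp add: numeral_2_eq_2)
  qed
  also have "\<dots> = (6*real p^2 + 5*real p - 1) * 4^p + real p + 1"
    unfolding top unfolding f_def w_def
    by (subst odd_binomial_quadratic_sum) (auto simp: power_add power_mult field_simps four_power power2_eq_square)
  finally show ?thesis .
qed

section \<open>The summands of h\<close>

lemma two_powr_diff: "(2::real) powr (real a - real b) = 2^a / 2^b"
  by (simp add: powr_diff powr_realpow)

lemma two_powr_1_minus: "(2::real) powr (1 - real n) = 2 / 2^n"
  using two_powr_diff[of 1 n] by simp

lemma two_powr_1_minus_2p: "(2::real) powr (1 - 2*real p) = 2 / 4^p"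
  using two_powr_diff[of 1 "2*p"] by (simp add: power_mult)

lemma two_powr_1_minus_n_2p: "(2::real) powr (1 - real n - 2*real p) = 2 / (2^n * 4^p)"
  using two_powr_diff[of 1 "n+2*p"] by (simp add: power_mult power_add diff_diff_eq)

lemma two_powr_2_minus: "(2::real) powr (2 - real n) = 4 / 2^n"
  using two_powr_diff[of 2 n] by simp

lemma halving_sum_linear3:
  "(\<Sum>k\<in>K. c * 2 powr (- real k) * (\<alpha> * x k - y k + z k))
     = c * (\<alpha> * (\<Sum>k\<in>K. x k / 2^k) - (\<Sum>k\<in>K. y k / 2^k) + (\<Sum>k\<in>K. z k / 2^k))"
proof -
  have "c * 2 powr (- real k) * (\<alpha> * x k - y k + z k)
      = c * (\<alpha> * (x k / 2^k)) - c * (y k / 2^k) + c * (z k / 2^k)" for k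
    using two_powr_diff[of 0 k] by (simp add: field_simps)
  then have "(\<Sum>k\<in>K. c * 2 powr (- real k) * (\<alpha> * x k - y k + z k))
      = (\<Sum>k\<in>K. c * (\<alpha> * (x k / 2^k)) - c * (y k / 2^k) + c * (z k / 2^k))"
    by (intro sum.cong refl)
  also have "\<dots> = c * (\<alpha> * (\<Sum>k\<in>K. x k / 2^k) - (\<Sum>k\<in>K. y k / 2^k) + (\<Sum>k\<in>K. z k / 2^k))"
    by (simp only: sum.distrib sum_subtractf flip: sum_distrib_left) (simp add: algebra_simps)
  finally show ?thesis .
qed

lemma halving_sum_linear2:
  "(\<Sum>k\<in>K. c * 2 powr (- real k) * (x k - \<beta> * y k))
     = c * ((\<Sum>k\<in>K. x k / 2^k) - \<beta> * (\<Sum>k\<in>K. y k / 2^k))"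
proof -
  have "c * 2 powr (- real k) * (x k - \<beta> * y k)
      = c * (x k / 2^k) - c * (\<beta> * (y k / 2^k))" for k
    using two_powr_diff[of 0 k] by (simp add: field_simps)
  then have "(\<Sum>k\<in>K. c * 2 powr (- real k) * (x k - \<beta> * y k))
      = (\<Sum>k\<in>K. c * (x k / 2^k) - c * (\<beta> * (y k / 2^k)))"
    by (intro sum.cong refl)
  also have "\<dots> = c * ((\<Sum>k\<in>K. x k / 2^k) - \<beta> * (\<Sum>k\<in>K. y k / 2^k))"
    by (simp only: sum_subtractf flip: sum_distrib_left) (simp add: algebra_simps)
  finally show ?thesis .
qed

definition h_summand :: "nat \<Rightarrow> nat \<Rightarrow> nat \<Rightarrow> real" where
  "h_summand n p i =
     2 powr (1 - real n - 2*real p) *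
       (real i * (2 * real ((n+2*p+3) choose (n+2*i+1))
                  - real ((n+2*p+3) choose (n+2*i+2))
                  - (2*real n + 4*real p + 4) * real ((2*p+3) choose (2*i+1))))
   + 2 powr (2 - real n) *
       (\<Sum>k=2*i-1..2*p. real i * 2 powr (- real k) *
          ((real n + 2*real p) / (real n + 2*real p + 1) * real ((n+k+2) choose (n+2*i+1))
           - real ((n+k+2) choose (n+2*i)) + real ((k+3) choose (2*i+1))))
   + 2 powr (1 - 2*real p) *
       (\<Sum>k=1..n. real i * 2 powr (- real k) *
          (real ((k+2*p+3) choose (k+2*i+2))
           - (2*real n + 4*real p + 4) / (real n + 2*real p + 1) * real ((k+2*p+2) choose (k+2*i+1))))"

lemma h_as_sum_of_summands:
  "h n p = (4*real p^2 + 2*real p) / (real n + 2*real p + 1) + 4*real p - 2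
     + (4*real p^2 + 4*real n*real p + 2*real n + 6*real p + 2) * (2 / 2^n)
     + 2 / 4^p
     - (4*real p^2 + 2*real n*real p + 2*real n + 6*real p + 2) * (2 / (2^n * 4^p))
     + (\<Sum>i=1..p. h_summand n p i)"
  unfolding h_def h_summand_def sum.distrib sum_distrib_left
    two_powr_1_minus two_powr_1_minus_2p two_powr_1_minus_n_2p
  by (simp only: add.assoc)

lemma tail_sum_diagonal:
  assumes "1 \<le> i" and "i \<le> p"
  shows "(\<Sum>k=2*i-1..2*p. real ((n+k+2) choose (n+2*i+1)) / 2^k)
      = binom_prefix (n+2*p+3) (2*p+1-2*i) / 4^p"
proof -
  have "(\<Sum>k=2*i-1..2*p. real ((n+k+2) choose (n+2*i+1)) / 2^k)
      = (\<Sum>k=2*i-1..2*p. real ((k+(n+2)) choose (2*i-1+(n+2))) / 2^k)"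
    using assms by (simp add: algebra_simps)
  also have "\<dots> = binom_prefix (Suc (2*p) + (n+2)) (2*p - (2*i-1)) / 2^(2*p)"
    using assms by (intro halving_sum_from_diagonal) simp
  also have "Suc (2*p) + (n+2) = n+2*p+3" by simp
  also have "2*p - (2*i-1) = 2*p+1-2*i" using assms by simp
  also have "(2::real)^(2*p) = 4^p" by (simp add: power_mult)
  finally show ?thesis .
qed

lemma tail_sum_below_diagonal:
  assumes "1 \<le> i" and "i \<le> p"
  shows "(\<Sum>k=2*i-1..2*p. real ((n+k+2) choose (n+2*i)) / 2^k)
      = binom_prefix (n+2*p+3) (2*p+2-2*i) / 4^p - 4 / 4^i"
proof -
  have "(\<Sum>k=2*i-1..2*p. real ((n+k+2) choose (n+2*i)) / 2^k)
      = (\<Sum>k=2*i-1..2*p. real ((k+(n+2)) choose (2*i-1+(n+2)-1)) / 2^k)"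
    using assms by (simp add: algebra_simps)
  also have "\<dots> = binom_prefix (Suc (2*p) + (n+2)) (Suc (2*p) - (2*i-1)) / 2^(2*p) - 2 / 2^(2*i-1)"
    using assms by (intro halving_sum_below_diagonal) simp_all
  also have "Suc (2*p) + (n+2) = n+2*p+3" by simp
  also have "Suc (2*p) - (2*i-1) = 2*p+2-2*i" using assms by simp
  also have "(2::real)^(2*p) = 4^p" by (simp add: power_mult)
  also have "(2::real) / 2^(2*i-1) = 4 / 4^i"
    using assms by (cases i) (simp_all add: power_mult)
  finally show ?thesis .
qed

lemma tail_sum_short_row:
  assumes "1 \<le> i" and "i \<le> p"
  shows "(\<Sum>k=2*i-1..2*p. real ((k+3) choose (2*i+1)) / 2^k)
      = 16 - 4 / 4^i - binom_prefix (2*p+4) (2*i+1) / 4^p"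
proof -
  have "(\<Sum>k=2*i-1..2*p. real ((k+3) choose (2*i+1)) / 2^k)
      = (\<Sum>k=2*i-1..2*p. real ((k+3) choose (2*i-1+3-1)) / 2^k)"
    using assms by simp
  also have "\<dots> = binom_prefix (Suc (2*p) + 3) (Suc (2*p) - (2*i-1)) / 2^(2*p) - 2 / 2^(2*i-1)"
    using assms by (intro halving_sum_below_diagonal) simp_all
  also have "Suc (2*p) + 3 = 2*p+4" by simp
  also have "Suc (2*p) - (2*i-1) = 2*p+4 - Suc (2*i+1)" using assms by simp
  also have "binom_prefix (2*p+4) (2*p+4 - Suc (2*i+1)) = 2^(2*p+4) - binom_prefix (2*p+4) (2*i+1)"
    using binom_prefix_complement[of "2*i+1" "2*p+4"] assms by simp
  also have "(2::real) / 2^(2*i-1) = 4 / 4^i"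
    using assms by (cases i) (simp_all add: power_mult)
  finally show ?thesis
    by (simp add: power_add power_mult diff_divide_distrib)
qed

lemma second_inner_sum:
  assumes "1 \<le> i" and "i \<le> p"
  shows "(\<Sum>k=2*i-1..2*p. real i * 2 powr (- real k) *
            (\<alpha> * real ((n+k+2) choose (n+2*i+1)) - real ((n+k+2) choose (n+2*i))
             + real ((k+3) choose (2*i+1))))
       = real i * (\<alpha> * (binom_prefix (n+2*p+3) (2*p+1-2*i) / 4^p)
                   - (binom_prefix (n+2*p+3) (2*p+2-2*i) / 4^p - 4 / 4^i)
                   + (16 - 4 / 4^i - binom_prefix (2*p+4) (2*i+1) / 4^p))"
  by (simp only: halving_sum_linear3 tail_sum_diagonal[OF assms]
      tail_sum_below_diagonal[OF assms] tail_sum_short_row[OF assms])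

lemma third_inner_sum:
  assumes "i \<le> p"
  shows "(\<Sum>k=1..n. real i * 2 powr (- real k) *
            (real ((k+2*p+3) choose (k+2*i+2)) - \<beta> * real ((k+2*p+2) choose (k+2*i+1))))
       = real i * ((binom_prefix (2*p+4) (2*p+1-2*i) - binom_prefix (n+2*p+4) (2*p+1-2*i) / 2^n)
            - \<beta> * (binom_prefix (2*p+3) (2*p+1-2*i) - binom_prefix (n+2*p+3) (2*p+1-2*i) / 2^n))"
proof -
  have wide: "(\<Sum>k=1..n. real ((k+2*p+3) choose (k+2*i+2)) / 2^k)
      = binom_prefix (2*p+4) (2*p+1-2*i) - binom_prefix (n+2*p+4) (2*p+1-2*i) / 2^n"
  proof -
    have "(\<Sum>k=1..n. real ((k+2*p+3) choose (k+2*i+2)) / 2^k)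
        = (\<Sum>k=1..n. real ((k+(2*p+3)) choose (k+(2*i+2))) / 2^k)"
      by (simp only: add.assoc)
    also have "\<dots> = binom_prefix (Suc (2*p+3)) (2*p+3-(2*i+2))
                      - binom_prefix (Suc n + (2*p+3)) (2*p+3-(2*i+2)) / 2^n"
      using assms by (intro halving_sum_band) simp
    also have "2*p+3-(2*i+2) = 2*p+1-2*i" by simp
    also have "Suc (2*p+3) = 2*p+4" by simp
    also have "Suc n + (2*p+3) = n+2*p+4" by simp
    finally show ?thesis .
  qed
  have narrow: "(\<Sum>k=1..n. real ((k+2*p+2) choose (k+2*i+1)) / 2^k)
      = binom_prefix (2*p+3) (2*p+1-2*i) - binom_prefix (n+2*p+3) (2*p+1-2*i) / 2^n"
  proof -
    have "(\<Sum>k=1..n. real ((k+2*p+2) choose (k+2*i+1)) / 2^k)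
        = (\<Sum>k=1..n. real ((k+(2*p+2)) choose (k+(2*i+1))) / 2^k)"
      by (simp only: add.assoc)
    also have "\<dots> = binom_prefix (Suc (2*p+2)) (2*p+2-(2*i+1))
                      - binom_prefix (Suc n + (2*p+2)) (2*p+2-(2*i+1)) / 2^n"
      using assms by (intro halving_sum_band) simp
    also have "2*p+2-(2*i+1) = 2*p+1-2*i" by simp
    also have "Suc (2*p+2) = 2*p+3" by simp
    also have "Suc n + (2*p+2) = n+2*p+3" by simp
    finally show ?thesis .
  qed
  show ?thesis
    by (simp only: halving_sum_linear2 wide narrow)
qed

(* After the inner sums are evaluated, the quantities P = S(n+2p+3, r), Q = C(n+2p+3, r) and
   R = C(n+2p+3, r+1) coming from the long row cancel; only rows 2p+3 and 2p+4 remain. *)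
lemma large_row_cancellation:
  fixes A B D x y i P Q R Y1 Y2 Y3 Y4 :: real
  assumes "A > 0" "B > 0" "D > 0" "x \<ge> 0" "y \<ge> 0"
  shows "2/(A*B) * (i * (2*R - Q - (2*x + 4*y + 4) * Y4))
    + 4/A * (i * ((x + 2*y)/(x + 2*y + 1) * (P / B) - ((P + R)/B - 4/D) + (16 - 4/D - Y3/B)))
    + 2/B * (i * ((Y1 - (2*P - Q)/A) - (2*x + 4*y + 4)/(x + 2*y + 1) * (Y2 - P/A)))
    = i * (64/A - 4/(A*B) * Y3 + 2/B * Y1 - 4/B * (x + 2*y + 2)/(x + 2*y + 1) * Y2
           - 4/(A*B) * (x + 2*y + 2) * Y4)"
proof -
  define N where "N = x + 2*y + 1"
  have "N > 0" and x: "x = N - 2*y - 1" using assms by (simp_all add: N_def)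
  show ?thesis
    unfolding x using assms \<open>N > 0\<close> by (simp add: field_simps)
qed

lemma h_summand_closed_form:
  assumes "1 \<le> i" and "i \<le> p"
  shows "h_summand n p i = real i *
     (64/2^n - 4/(2^n*4^p) * binom_prefix (2*p+4) (2*i+1)
      + 2/4^p * binom_prefix (2*p+4) (2*p+1-2*i)
      - 4/4^p * (real n + 2*real p + 2)/(real n + 2*real p + 1) * binom_prefix (2*p+3) (2*p+1-2*i)
      - 4/(2^n*4^p) * (real n + 2*real p + 2) * real ((2*p+3) choose (2*i+1)))"
proof -
  have upper: "(n+2*p+3) choose (n+2*i+1) = (n+2*p+3) choose Suc (2*p+1-2*i)"
  proof -
    have "(n+2*p+3) - (n+2*i+1) = Suc (2*p+1-2*i)" using assms by simp
    then show ?thesis using binomial_symmetric[of "n+2*i+1" "n+2*p+3"] assms by simp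
  qed
  have lower: "(n+2*p+3) choose (n+2*i+2) = (n+2*p+3) choose (2*p+1-2*i)"
  proof -
    have "(n+2*p+3) - (n+2*i+2) = 2*p+1-2*i" using assms by simp
    then show ?thesis using binomial_symmetric[of "n+2*i+2" "n+2*p+3"] assms by simp
  qed
  have shift_bound: "binom_prefix (n+2*p+3) (2*p+2-2*i)
      = binom_prefix (n+2*p+3) (2*p+1-2*i) + real ((n+2*p+3) choose Suc (2*p+1-2*i))"
  proof -
    have "2*p+2-2*i = Suc (2*p+1-2*i)" using assms by simp
    then show ?thesis by (simp only: binom_prefix_Suc)
  qed
  have shift_row: "binom_prefix (n+2*p+4) (2*p+1-2*i)
      = 2 * binom_prefix (n+2*p+3) (2*p+1-2*i) - real ((n+2*p+3) choose (2*p+1-2*i))"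
  proof -
    have "n+2*p+4 = Suc (n+2*p+3)" by simp
    then show ?thesis by (simp only: binom_prefix_Suc_row)
  qed
  show ?thesis
    unfolding h_summand_def second_inner_sum[OF assms] third_inner_sum[OF assms(2)]
      two_powr_1_minus_n_2p two_powr_2_minus two_powr_1_minus_2p upper lower shift_bound shift_row
    by (rule large_row_cancellation) simp_all
qed

lemma sum_h_summands:
  "(\<Sum>i=1..p. h_summand n p i) =
     64/2^n * (real p * (real p + 1) / 2)
     - 4/(2^n*4^p) * ((6*real p^2 + 5*real p - 1) * 4^p + real p + 1)
     + 2/4^p * ((2*real p^2 - real p + 1) * 4^p - 1)
     - 4/4^p * (real n + 2*real p + 2)/(real n + 2*real p + 1) * (real p * (2*real p+1) * 4^p / 2)
     - 4/(2^n*4^p) * (real n + 2*real p + 2) * ((2*real p+1) * 4^p - (real p+1))"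
proof -
  have linear: "(\<Sum>i=1..p. real i * (a - b * f1 i + c * f2 i - d * f3 i - e * f4 i))
      = a * (\<Sum>i=1..p. real i) - b * (\<Sum>i=1..p. real i * f1 i) + c * (\<Sum>i=1..p. real i * f2 i)
        - d * (\<Sum>i=1..p. real i * f3 i) - e * (\<Sum>i=1..p. real i * f4 i)"
    for a b c d e :: real and f1 f2 f3 f4 :: "nat \<Rightarrow> real"
    by (simp add: sum_distrib_left sum.distrib sum_subtractf algebra_simps)
  have gauss: "(\<Sum>i=1..p. real i) = real p * (real p + 1) / 2"
    using double_gauss_sum_from_Suc_0[of p, where 'a=real] by simp
  have "(\<Sum>i=1..p. h_summand n p i) = (\<Sum>i=1..p. real i *
     (64/2^n - 4/(2^n*4^p) * binom_prefix (2*p+4) (2*i+1)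
      + 2/4^p * binom_prefix (2*p+4) (2*p+1-2*i)
      - 4/4^p * (real n + 2*real p + 2)/(real n + 2*real p + 1) * binom_prefix (2*p+3) (2*p+1-2*i)
      - 4/(2^n*4^p) * (real n + 2*real p + 2) * real ((2*p+3) choose (2*i+1))))"
    by (intro sum.cong refl h_summand_closed_form) auto
  then show ?thesis
    by (simp only: linear gauss sum_i_prefix_2p4 sum_i_prefix_2p4_reversed
        sum_i_prefix_2p3_reversed sum_i_binomial_2p3)
qed

(* Replacing the sums in h by their closed forms, the identity h(n,p) = 0 is algebraic in
   2^n, 4^p, n and p. *)
theorem lemma14:
  fixes n p :: nat
  shows "h n p = 0"
proof -
  define A where "A = (2::real)^n"
  define B where "B = (4::real)^p"
  define N where "N = real n + 2*real p + 1"
  have pos: "A > 0" "B > 0" "N > 0" unfolding A_def B_def N_def by simp_all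
  have denominators: "real n + 2*real p + 1 = N" "real n + 2*real p + 2 = N + 1"
    unfolding N_def by simp_all
  have n: "real n = N - 2*real p - 1" unfolding N_def by simp
  show ?thesis
    unfolding h_as_sum_of_summands sum_h_summands A_def[symmetric] B_def[symmetric]
    unfolding denominators unfolding n
    using pos by (simp add: field_simps power2_eq_square)
qed

end
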